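(* Let $r\ge 1$ be an odd integer. For every nonnegative integer $n$, the number of overpartitions of $n$ in which every non-overlined part is even and greater than $r$ (overlined parts being unrestricted apart from being distinct) equals the number of partitions of $n$ in which no even integer less than $r$ appears as a part.
   Context: A partition of $n$ is a finite non-increasing sequence of positive integers (parts) summing to $n$ (the empty partition is the unique partition of $0$). An overpartition of $n$ is a partition of $n$ in which the first occurrence of each part size may be overlined; equivalently, a pair $(\lambda,\mu)$ with $\lambda$ a partition into distinct parts (the overlined parts), $\mu$ an arbitrary partition (the non-overlined parts), and $|\lambda|+|\mu|=n$. *)

theory Defs
  imports Main "HOL-Library.Multiset"
begin

definition partitions :: "nat \<Rightarrow> nat multiset set" where
  "partitions n = {M. (\<forall>p\<in>#M. 0 < p) \<and> sum_mset M = n}"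

text \<open>An overpartition of n: a pair (lambda, mu) with lambda a finite set of positive
  integers (the distinct overlined parts) and mu a partition (the non-overlined parts),
  with total sum n.\<close>
definition overpartitions :: "nat \<Rightarrow> (nat set \<times> nat multiset) set" where
  "overpartitions n = {(L, M). finite L \<and> (\<forall>p\<in>L. 0 < p) \<and> (\<forall>p\<in>#M. 0 < p)
                          \<and> \<Sum>L + sum_mset M = n}"

end

theory Submission
  imports Defs "HOL-Library.Nat_Bijection" "HOL-Computational_Algebra.Primes"
begin

text \<open>Glaisher's bijection: every positive integer is uniquely \<open>2^k * q\<close> with \<open>q\<close> odd, and
  splitting each part \<open>2^k * q\<close> of a set of distinct parts into \<open>2^k\<close> copies of \<open>q\<close> turns it into
  a partition into odd parts; the multiplicity of \<open>q\<close>, read in binary, recovers which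
  \<open>2^k * q\<close> were present. Applied to the overlined parts of an overpartition whose
  non-overlined parts are all even, this is a bijection onto all partitions, with the odd parts
  coming from the overlined ones and the even parts from the non-overlined ones. As \<open>r\<close> is
  odd, an even part exceeds \<open>r\<close> exactly when it is not below \<open>r\<close>.\<close>

definition odd_part :: "nat \<Rightarrow> nat" where
  "odd_part p = p div 2 ^ multiplicity 2 p"

lemma pow2_mult_odd_part: "2 ^ multiplicity 2 p * odd_part p = p"
  unfolding odd_part_def using multiplicity_dvd[of 2 p] by simp

lemma odd_odd_part: "p \<noteq> 0 \<Longrightarrow> odd (odd_part p)"
  unfolding odd_part_def using multiplicity_decompose[of p 2] by simp

lemma multiplicity_2_pow2_mult_odd: "odd (q::nat) \<Longrightarrow> multiplicity 2 (2 ^ k * q) = k"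
  by (rule multiplicity_decomposeI) auto

lemma odd_part_pow2_mult_odd: "odd (q::nat) \<Longrightarrow> odd_part (2 ^ k * q) = q"
  by (simp add: odd_part_def multiplicity_2_pow2_mult_odd)

lemma pow2_mult_odd_eq_iff:
  fixes q q' :: nat
  assumes "odd q" "odd q'"
  shows "2 ^ k * q = 2 ^ k' * q' \<longleftrightarrow> k = k' \<and> q = q'"
  using multiplicity_2_pow2_mult_odd odd_part_pow2_mult_odd assms by metis

lemma finite_pow2_mult_preimage:
  fixes q :: nat
  assumes "finite L" "q \<noteq> 0"
  shows "finite {k. 2 ^ k * q \<in> L}"
proof -
  have "inj (\<lambda>k. 2 ^ k * q)"
    using assms(2) by (auto intro: injI)
  then show ?thesis
    using finite_vimageI[OF assms(1)] by (simp add: vimage_def)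
qed

definition glaisher :: "nat set \<Rightarrow> nat multiset" where
  "glaisher L = (\<Sum>p\<in>L. replicate_mset (2 ^ multiplicity 2 p) (odd_part p))"

definition glaisher_inv :: "nat multiset \<Rightarrow> nat set" where
  "glaisher_inv N = (\<Union>q\<in>set_mset N. (\<lambda>k. 2 ^ k * q) ` set_decode (count N q))"

lemma sum_mset_glaisher: "finite L \<Longrightarrow> sum_mset (glaisher L) = \<Sum>L"
  unfolding glaisher_def by (induction L rule: finite_induct) (simp_all add: pow2_mult_odd_part)

lemma count_glaisher:
  assumes "finite L" "\<forall>p\<in>L. 0 < p"
  shows "count (glaisher L) q = (if odd q then set_encode {k. 2 ^ k * q \<in> L} else 0)"
proof -
  have "count (glaisher L) q = (\<Sum>p\<in>{p\<in>L. odd_part p = q}. 2 ^ multiplicity 2 p)"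
    unfolding glaisher_def count_sum using assms(1) by (simp add: sum.inter_filter eq_commute)
  also have "\<dots> = (if odd q then set_encode {k. 2 ^ k * q \<in> L} else 0)"
  proof (cases "odd q")
    case True
    have "{p\<in>L. odd_part p = q} = (\<lambda>k. 2 ^ k * q) ` {k. 2 ^ k * q \<in> L}"
      using True by (auto simp: odd_part_pow2_mult_odd image_iff) (metis pow2_mult_odd_part)
    moreover have "inj_on (\<lambda>k. 2 ^ k * q) {k. 2 ^ k * q \<in> L}"
      using True by (auto intro: inj_onI)
    ultimately show ?thesis
      using True by (simp add: sum.reindex set_encode_def multiplicity_2_pow2_mult_odd)
  next
    case False
    have "{p\<in>L. odd_part p = q} = {}"
      using False assms(2) odd_odd_part by fastforce
    then show ?thesis
      using False by (simp only:) simp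
  qed
  finally show ?thesis .
qed

lemma in_glaisher_imp_odd:
  assumes "finite L" "\<forall>p\<in>L. 0 < p" "q \<in># glaisher L"
  shows "odd q"
  using assms count_glaisher[OF assms(1,2), of q]
  by (auto simp: not_in_iff[symmetric] split: if_splits)

lemma pow2_mult_in_glaisher_inv_iff:
  assumes "\<forall>q\<in>#N. odd q" "odd q"
  shows "2 ^ k * q \<in> glaisher_inv N \<longleftrightarrow> k \<in> set_decode (count N q)"
  using assms pow2_mult_odd_eq_iff
  by (fastforce simp: glaisher_inv_def count_eq_zero_iff[symmetric])

lemma glaisher_glaisher_inv:
  assumes "\<forall>q\<in>#N. odd q"
  shows "glaisher (glaisher_inv N) = N"
proof (rule multiset_eqI)
  have fin: "finite (glaisher_inv N)" and pos: "\<forall>p\<in>glaisher_inv N. 0 < p"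
    using assms by (auto simp: glaisher_inv_def odd_pos)
  fix q
  show "count (glaisher (glaisher_inv N)) q = count N q"
    using assms by (auto simp: count_glaisher[OF fin pos] pow2_mult_in_glaisher_inv_iff
        count_eq_zero_iff)
qed

lemma inj_on_glaisher: "inj_on glaisher {L. finite L \<and> (\<forall>p\<in>L. 0 < p)}"
proof (rule inj_onI)
  fix L L'
  assume L: "L \<in> {L. finite L \<and> (\<forall>p\<in>L. 0 < p)}"
    and L': "L' \<in> {L. finite L \<and> (\<forall>p\<in>L. 0 < p)}"
    and eq: "glaisher L = glaisher L'"
  have layers: "{k. 2 ^ k * q \<in> L} = {k. 2 ^ k * q \<in> L'}" if "odd q" for q
  proof -
    have "set_encode {k. 2 ^ k * q \<in> L} = set_encode {k. 2 ^ k * q \<in> L'}"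
      using eq L L' that by (metis (no_types, lifting) count_glaisher mem_Collect_eq)
    then show ?thesis
      using L L' that by (simp add: set_encode_eq finite_pow2_mult_preimage odd_pos)
  qed
  have same_member: "p \<in> L \<longleftrightarrow> p \<in> L'" if "0 < p" for p
  proof -
    have "odd (odd_part p)"
      using that odd_odd_part by simp
    from layers[OF this]
    have "2 ^ multiplicity 2 p * odd_part p \<in> L \<longleftrightarrow> 2 ^ multiplicity 2 p * odd_part p \<in> L'"
      by blast
    then show ?thesis
      by (simp only: pow2_mult_odd_part)
  qed
  show "L = L'"
  proof (rule set_eqI)
    fix p
    show "p \<in> L \<longleftrightarrow> p \<in> L'"
      using L L' same_member[of p] by (cases "p = 0") auto
  qed
qed

lemma bij_betw_glaisher:
  "bij_betw glaisher {L. finite L \<and> (\<forall>p\<in>L. 0 < p)} {N. \<forall>q\<in>#N. odd q}"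
proof (rule bij_betw_imageI[OF inj_on_glaisher], rule set_eqI, rule iffI)
  fix N :: "nat multiset"
  assume "N \<in> glaisher ` {L. finite L \<and> (\<forall>p\<in>L. 0 < p)}"
  then show "N \<in> {N. \<forall>q\<in>#N. odd q}"
    using in_glaisher_imp_odd by auto
next
  fix N :: "nat multiset"
  assume N: "N \<in> {N. \<forall>q\<in>#N. odd q}"
  then have "glaisher_inv N \<in> {L. finite L \<and> (\<forall>p\<in>L. 0 < p)}"
    by (auto simp: glaisher_inv_def odd_pos)
  moreover have "N = glaisher (glaisher_inv N)"
    using N by (simp add: glaisher_glaisher_inv)
  ultimately show "N \<in> glaisher ` {L. finite L \<and> (\<forall>p\<in>L. 0 < p)}"
    by (rule rev_image_eqI)
qed

lemma bij_betw_plus_mset_disjoint: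
  assumes "\<And>x. \<not> (P x \<and> Q x)"
  shows "bij_betw (\<lambda>(M, N). M + N) ({M. \<forall>x\<in>#M. P x} \<times> {N. \<forall>x\<in>#N. Q x})
           {K. \<forall>x\<in>#K. P x \<or> Q x}"
proof (rule bij_betw_byWitness[where f' = "\<lambda>K. (filter_mset P K, filter_mset Q K)"])
  show "\<forall>a\<in>{M. \<forall>x\<in>#M. P x} \<times> {N. \<forall>x\<in>#N. Q x}.
          (\<lambda>K. (filter_mset P K, filter_mset Q K)) ((\<lambda>(M, N). M + N) a) = a"
  proof
    fix a
    assume "a \<in> {M. \<forall>x\<in>#M. P x} \<times> {N. \<forall>x\<in>#N. Q x}"
    then obtain M N where a: "a = (M, N)" and "\<forall>x\<in>#M. P x" "\<forall>x\<in>#N. Q x"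
      by blast
    then have "filter_mset P M = M" "filter_mset Q N = N"
      by (metis filter_mset_True filter_mset_cong0)+
    moreover have "filter_mset Q M = {#}" "filter_mset P N = {#}"
      using assms \<open>\<forall>x\<in>#M. P x\<close> \<open>\<forall>x\<in>#N. Q x\<close> by auto
    ultimately show "(\<lambda>K. (filter_mset P K, filter_mset Q K)) ((\<lambda>(M, N). M + N) a) = a"
      by (simp add: a)
  qed
next
  show "\<forall>K\<in>{K. \<forall>x\<in>#K. P x \<or> Q x}.
          (\<lambda>(M, N). M + N) ((\<lambda>K. (filter_mset P K, filter_mset Q K)) K) = K"
  proof
    fix K
    assume "K \<in> {K. \<forall>x\<in>#K. P x \<or> Q x}"
    then have "filter_mset Q K = filter_mset (\<lambda>x. \<not> P x) K"
      using assms by (auto intro: filter_mset_cong)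
    then show "(\<lambda>(M, N). M + N) ((\<lambda>K. (filter_mset P K, filter_mset Q K)) K) = K"
      by (simp add: multiset_partition[symmetric])
  qed
qed auto

lemma bij_betw_glaisher_plus:
  "bij_betw (\<lambda>(L, M). glaisher L + M)
     ({L. finite L \<and> (\<forall>p\<in>L. 0 < p)} \<times> {M. \<forall>p\<in>#M. even p \<and> 0 < p})
     {K. \<forall>p\<in>#K. 0 < p}"
proof -
  have "bij_betw ((\<lambda>(N, M). N + M) \<circ> map_prod glaisher id)
     ({L. finite L \<and> (\<forall>p\<in>L. 0 < p)} \<times> {M. \<forall>p\<in>#M. even p \<and> 0 < p})
     {K. \<forall>p\<in>#K. odd p \<or> even p \<and> 0 < p}"
    by (rule bij_betw_trans[OF bij_betw_map_prod[OF bij_betw_glaisher bij_betw_id]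
          bij_betw_plus_mset_disjoint]) simp
  moreover have "(\<lambda>(N, M). N + M) \<circ> map_prod glaisher id = (\<lambda>(L, M). glaisher L + M)"
    by auto
  moreover have "(odd p \<or> even p \<and> 0 < p) \<longleftrightarrow> 0 < p" for p :: nat
    using odd_pos by auto
  ultimately show ?thesis
    by simp
qed

theorem proposition2p4:
  fixes r n :: nat
  assumes "r \<ge> 1" and "odd r"
  shows "card {(L, M) \<in> overpartitions n. \<forall>p\<in>#M. even p \<and> r < p}
       = card {M \<in> partitions n. \<forall>p\<in>#M. \<not> (even p \<and> p < r)}"
proof -
  let ?D = "{L :: nat set. finite L \<and> (\<forall>p\<in>L. 0 < p)}
    \<times> {M :: nat multiset. \<forall>p\<in>#M. even p \<and> 0 < p}"
  let ?P = "\<lambda>(L, M). \<Sum>L + sum_mset M = n \<and> (\<forall>p\<in>#M. r < p)"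
  let ?Q = "\<lambda>K. sum_mset K = n \<and> (\<forall>p\<in>#K. \<not> (even p \<and> p < r))"
  have "card {(L, M) \<in> overpartitions n. \<forall>p\<in>#M. even p \<and> r < p} = card {x \<in> ?D. ?P x}"
    by (rule arg_cong[where f = card]) (auto simp: overpartitions_def)
  also have "\<dots> = card {K \<in> {K. \<forall>p\<in>#K. 0 < p}. ?Q K}"
  proof (rule bij_betw_same_card, rule bij_betw_Collect[OF bij_betw_glaisher_plus])
    fix x
    assume "x \<in> ?D"
    then obtain L M where x: "x = (L, M)" and L: "finite L" "\<forall>p\<in>L. 0 < p"
      and M: "\<forall>p\<in>#M. even p \<and> 0 < p"
      by blast
    have "\<not> (even p \<and> p < r) \<longleftrightarrow> r < p" if "p \<in># M" for p
      using M that \<open>odd r\<close> by (cases "p = r") auto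
    then have "(\<forall>p\<in>#glaisher L + M. \<not> (even p \<and> p < r)) \<longleftrightarrow> (\<forall>p\<in>#M. r < p)"
      using in_glaisher_imp_odd[OF L] by auto
    then show "?Q ((\<lambda>(L, M). glaisher L + M) x) \<longleftrightarrow> ?P x"
      by (simp add: x sum_mset_glaisher L)
  qed
  also have "\<dots> = card {M \<in> partitions n. \<forall>p\<in>#M. \<not> (even p \<and> p < r)}"
    by (rule arg_cong[where f = card]) (auto simp: partitions_def)
  finally show ?thesis .
qed

end
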